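(* Let $r\in(0,1/2)$. Consider the independent-coding distributed delay diversity scheme described in the context, with deterministic delays whose relative delay $T_0=|\tau_2-\tau_1|$ satisfies $T_0B_w\ge2$. Then $$d_{TDA}(r):=\lim_{\mathrm{SNR}\to\infty}-\frac{\log\Pr[I_{TDA}<R(\mathrm{SNR})]}{\log\mathrm{SNR}}=3(1-2r).$$ This equals the diversity–multiplexing tradeoff $d_{stc}(r)$ of the synchronous space-time-coded scheme.
   Context: Network: a source $N_S$, two relays $N_{R_1},N_{R_2}$ and a destination $N_D$. The gains $\alpha_{i,j}$, $i\in\{S,R_1,R_2\}$, $j\in\{R_1,R_2,D\}$, $i\neq j$, are mutually independent zero-mean circularly symmetric complex Gaussian random variables with variances $\sigma^2_{i,j}>0$. For $\mathrm{SNR}>0$ set $\rho_0=\frac23\mathrm{SNR}$. The target rate is $R=R(\mathrm{SNR})=r\log(1+\mathrm{SNR}\,\sigma^2_{S,D})$. Relay $R_k$ belongs to the decoding set $\mathcal D(s)$ iff $\frac12\log(1+\rho_0|\alpha_{S,R_k}|^2)\ge R$. Independent-coding distributed delay diversity scheme: - Signals have baseband bandwidth $B_w>0$. - In phase 2 all successful relays send the same Gaussian codeword, independent of the source codeword. - The signal from relay $R_k$ reaches $N_D$ with delay $\tau_k$. - Conditioned on $\mathcal D(s)$, $$I_{TDA}=\frac12\log(1+\rho_0|\alpha_{S,D}|^2)+\frac{1}{2B_w}\int_{-B_w/2}^{B_w/2}\log\left(1+\rho_0\Big|\sum_{R_k\in\mathcal D(s)}\alpha_{R_k,D}e^{j2\pi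 f\tau_k}\Big|^2\right)df,$$ where an empty sum equals $0$. The probability $\Pr[I_{TDA}<R]$ averages over the gains, including the randomness of $\mathcal D(s)$. *)

theory Defs
  imports "HOL-Probability.Probability"
begin

datatype node = S | R1 | R2 | D

definition links :: "(node \<times> node) set" where
  "links = {(i,j). i \<in> {S,R1,R2} \<and> j \<in> {R1,R2,D} \<and> i \<noteq> j}"

text \<open>Density (w.r.t. Lebesgue measure on the complex plane) of a zero-mean circularly
  symmetric complex Gaussian with variance s2 = E of the squared modulus.\<close>
definition cgauss_density :: "real \<Rightarrow> complex \<Rightarrow> real" where
  "cgauss_density s2 z = exp (- (cmod z)\<^sup>2 / s2) / (pi * s2)"

definition rho0 :: "real \<Rightarrow> real" where
  "rho0 snr = 2/3 * snr"

definition target_rate :: "real \<Rightarrow> real \<Rightarrow> real \<Rightarrow> real" where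
  "target_rate r s2SD snr = r * ln (1 + snr * s2SD)"

definition dec_set :: "real \<Rightarrow> real \<Rightarrow> (node \<Rightarrow> node \<Rightarrow> complex) \<Rightarrow> node set" where
  "dec_set snr Rt a = {k \<in> {R1, R2}. 1/2 * ln (1 + rho0 snr * (cmod (a S k))\<^sup>2) \<ge> Rt}"

definition I_TDA :: "real \<Rightarrow> (node \<Rightarrow> real) \<Rightarrow> real \<Rightarrow> real \<Rightarrow> (node \<Rightarrow> node \<Rightarrow> complex) \<Rightarrow> real" where
  "I_TDA Bw tau snr Rt a =
     1/2 * ln (1 + rho0 snr * (cmod (a S D))\<^sup>2)
     + 1 / (2 * Bw) * integral {-Bw/2..Bw/2}
         (\<lambda>f. ln (1 + rho0 snr *
            (cmod (\<Sum>k\<in>dec_set snr Rt a. a k D * cis (2 * pi * f * tau k)))\<^sup>2))"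

definition outage_TDA ::
  "'w measure \<Rightarrow> (node \<Rightarrow> node \<Rightarrow> 'w \<Rightarrow> complex) \<Rightarrow> (node \<Rightarrow> node \<Rightarrow> real)
    \<Rightarrow> real \<Rightarrow> (node \<Rightarrow> real) \<Rightarrow> real \<Rightarrow> real \<Rightarrow> real" where
  "outage_TDA M \<alpha> s2 Bw tau r snr =
     measure M {\<omega> \<in> space M.
        I_TDA Bw tau snr (target_rate r (s2 S D) snr) (\<lambda>i j. \<alpha> i j \<omega>)
          < target_rate r (s2 S D) snr}"

end

theory Submission
  imports Defs "HOL-Real_Asymp.Real_Asymp"
begin

(*
  Let v = (exp (2 R) - 1) / rho0 be the level below which a squared link gain |a|^2 makes the
  single-link rate (1/2) ln (1 + rho0 |a|^2) fall short of the target R; v behaves like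
  SNR^(2r - 1).  Lower bound: if the three links leaving the source are all below v, no relay
  decodes and the direct link fails, so by independence and the Gaussian small-ball estimate
  P(|a|^2 < t) ~ t the outage probability is at least of order v^3.  Upper bound: since the two
  relay signals arrive with different delays, the band integral of
  ln (1 + rho |a1 e^(2 pi i f t1) + a2 e^(2 pi i f t2)|^2) is at least
  Bw kappa ln (1 + rho c max (|a1|, |a2|)^2) for every kappa < 1 (frequency diversity).
  Hence in outage one of four triples of gains is small: three of them below v, or the direct
  link below v and both relay-destination links below a level w ~ SNR^(2r/kappa - 1).  This
  gives outage <= const * v w^2, and letting kappa -> 1 both exponents meet at 3 (1 - 2 r).
*)

section \<open>Small-ball probabilities of a complex Gaussian\<close>

lemma cgauss_density_bounds:
  assumes "s > 0"
  shows cgauss_density_le: "cgauss_density s z \<le> 1 / (pi * s)"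
    and cgauss_density_ge: "(cmod z)\<^sup>2 \<le> s \<Longrightarrow> exp (-1) / (pi * s) \<le> cgauss_density s z"
  using assms unfolding cgauss_density_def by (auto intro!: divide_right_mono simp: field_simps)

lemma distributed_emeasure_preimage:
  assumes "distributed M N X f" and "A \<in> sets N"
  shows "emeasure M (X -` A \<inter> space M) = (\<integral>\<^sup>+x. f x * indicator A x \<partial>N)"
proof -
  have "emeasure M (X -` A \<inter> space M) = emeasure (distr M N X) A"
    using assms distributed_measurable[OF assms(1)] by (simp add: emeasure_distr)
  also have "\<dots> = emeasure (density N f) A"
    using distributed_distr_eq_density[OF assms(1)] by simp
  also have "\<dots> = (\<integral>\<^sup>+x. f x * indicator A x \<partial>N)"
    using assms distributed_borel_measurable[OF assms(1)] by (simp add: emeasure_density)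
  finally show ?thesis .
qed

lemma cgauss_small_ball:
  assumes "prob_space M" and dist: "distributed M lborel X (\<lambda>z. ennreal (cgauss_density s z))"
    and s: "s > 0" and t: "0 \<le> t"
  defines "E \<equiv> {\<omega>\<in>space M. (cmod (X \<omega>))\<^sup>2 < t}"
  shows cgauss_small_ball_sets: "E \<in> sets M"
    and cgauss_small_ball_le: "measure M E \<le> t / s"
    and cgauss_small_ball_ge: "t \<le> s \<Longrightarrow> t / (exp 1 * s) \<le> measure M E"
proof -
  interpret prob_space M by fact
  define A where "A = ball (0::complex) (sqrt t)"
  have A: "A \<in> sets lborel" unfolding A_def by simp
  have inA: "z \<in> A \<longleftrightarrow> (cmod z)\<^sup>2 < t" for z
  proof -
    have "z \<in> A \<longleftrightarrow> sqrt ((cmod z)\<^sup>2) < sqrt t" unfolding A_def by simp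
    then show ?thesis by (simp only: real_sqrt_less_iff)
  qed
  have E_eq: "E = X -` A \<inter> space M" unfolding E_def using inA by auto
  show E: "E \<in> sets M" unfolding E_eq using distributed_measurable[OF dist] A by measurable
  have lebA: "emeasure lborel A = ennreal (pi * t)"
    using emeasure_ball[of "sqrt t" "0::complex"] t unfolding A_def by (simp add: unit_ball_vol_2)
  have emE: "emeasure M E = (\<integral>\<^sup>+z. ennreal (cgauss_density s z) * indicator A z \<partial>lborel)"
    unfolding E_eq using distributed_emeasure_preimage[OF dist A] .
  have "emeasure M E \<le> (\<integral>\<^sup>+z. ennreal (1 / (pi * s)) * indicator A z \<partial>lborel)"
    unfolding emE by (intro nn_integral_mono mult_right_mono ennreal_leI cgauss_density_le[OF s]) auto
  also have "\<dots> = ennreal (t / s)"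
    using A lebA s by (simp add: nn_integral_cmult_indicator ennreal_mult'[symmetric])
  finally show "measure M E \<le> t / s"
    using s t by (simp add: measure_def enn2real_leI)
  assume ts: "t \<le> s"
  have "ennreal (t / (exp 1 * s)) = ennreal (exp (-1) / (pi * s)) * emeasure lborel A"
    using lebA s t by (simp add: ennreal_mult'[symmetric] exp_minus field_simps)
  also have "\<dots> = (\<integral>\<^sup>+z. ennreal (exp (-1) / (pi * s)) * indicator A z \<partial>lborel)"
    using A by (simp add: nn_integral_cmult_indicator)
  also have "\<dots> \<le> emeasure M E"
    unfolding emE using ts inA
    by (intro nn_integral_mono) (auto simp: indicator_def intro!: ennreal_leI cgauss_density_ge[OF s])
  finally show "t / (exp 1 * s) \<le> measure M E"
    using s t by (simp add: emeasure_eq_measure)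
qed

section \<open>Frequency diversity of two delayed paths\<close>

lemma cmod_cis_diff: "cmod (cis a - cis b) = cmod (cis (a - b) - 1)"
proof -
  have "cis a - cis b = cis b * (cis (a - b) - 1)"
    by (simp add: algebra_simps cis_mult)
  then show ?thesis by (simp add: norm_mult)
qed

lemma cmod_cis_minus_one_pos:
  assumes "0 < \<bar>u\<bar>" and "\<bar>u\<bar> < 2 * pi"
  shows "0 < cmod (cis u - 1)"
proof (rule ccontr)
  assume "\<not> 0 < cmod (cis u - 1)"
  then have "cos u = 1" by (metis cis.sel(1) norm_le_zero_iff not_less one_complex.sel(1) right_minus_eq)
  then obtain n :: int where n: "u = real_of_int n * 2 * pi" using cos_one_2pi_int by blast
  then have u: "\<bar>u\<bar> = \<bar>real_of_int n\<bar> * (2 * pi)" by (simp add: abs_mult)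
  show False
  proof (cases "n = 0")
    case True
    then show False using n assms by simp
  next
    case False
    then have "1 * (2 * pi) \<le> \<bar>real_of_int n\<bar> * (2 * pi)" by (intro mult_right_mono) auto
    then show False using u assms by simp
  qed
qed

lemma circle_points_separated:
  fixes T \<sigma> :: real and K :: nat
  assumes pos: "0 < \<sigma> * \<bar>T\<bar>" and small: "real K * \<sigma> * \<bar>T\<bar> \<le> 1"
  shows "\<exists>d>0. d \<le> 2 \<and> (\<forall>i j x. i < K \<longrightarrow> j < K \<longrightarrow> i \<noteq> j \<longrightarrow>
           d \<le> cmod (cis (2*pi*(x + real i * \<sigma>)*T) - cis (2*pi*(x + real j * \<sigma>)*T)))"
proof -
  have \<sigma>: "0 < \<sigma>" and T: "T \<noteq> 0" using pos by (auto simp: zero_less_mult_iff)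
  define h where "h m = cmod (cis (2*pi*real m*\<sigma>*T) - 1)" for m :: nat
  have h_pos: "0 < h m" if "1 \<le> m" "m < K" for m
  proof -
    have "real m * (\<sigma> * \<bar>T\<bar>) < real K * (\<sigma> * \<bar>T\<bar>)"
      using that pos by (intro mult_strict_right_mono) auto
    then have "real m * \<sigma> * \<bar>T\<bar> < 1" using small by (simp add: mult.assoc)
    moreover have "\<bar>2*pi*real m*\<sigma>*T\<bar> = 2 * pi * (real m * \<sigma> * \<bar>T\<bar>)"
      using \<sigma> by (simp add: abs_mult)
    ultimately have "\<bar>2*pi*real m*\<sigma>*T\<bar> < 2 * pi" by simp
    moreover have "0 < \<bar>2*pi*real m*\<sigma>*T\<bar>" using that T \<sigma> by (simp add: abs_mult)
    ultimately show ?thesis unfolding h_def by (intro cmod_cis_minus_one_pos)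
  qed
  define d where "d = Min (insert 2 (h ` {1..<K}))"
  have d_pos: "0 < d" unfolding d_def using h_pos by (subst Min_gr_iff) auto
  have d_le_h: "d \<le> h m" if "1 \<le> m" "m < K" for m unfolding d_def using that by (intro Min_le) auto
  have dist_eq: "cmod (cis (2*pi*(x + real i * \<sigma>)*T) - cis (2*pi*(x + real j * \<sigma>)*T)) = h (i - j)"
    if "j < i" for i j x
    unfolding cmod_cis_diff h_def using that by (simp add: algebra_simps of_nat_diff)
  show ?thesis
  proof (intro exI[of _ d] conjI d_pos allI impI)
    show "d \<le> 2" unfolding d_def by simp
    fix i j x assume "i < K" "j < K" "i \<noteq> j"
    then show "d \<le> cmod (cis (2*pi*(x + real i * \<sigma>)*T) - cis (2*pi*(x + real j * \<sigma>)*T))"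
      using dist_eq[of j i x] dist_eq[of i j x] d_le_h[of "i - j"] d_le_h[of "j - i"]
      by (cases "j < i") (auto simp: norm_minus_commute)
  qed
qed

lemma unit_pair_far:
  fixes a1 a2 u w :: complex
  assumes u: "cmod u = 1" and w: "cmod w = 1" and sep: "d \<le> cmod (u - w)"
    and d: "0 \<le> d" "d \<le> 2"
  shows "d/4 * max (cmod a1) (cmod a2) \<le> max (cmod (a1 + a2 * u)) (cmod (a1 + a2 * w))"
proof (cases "2 * cmod a2 < cmod a1")
  case True
  have "cmod a1 - cmod a2 \<le> cmod (a1 + a2 * u)"
    using norm_diff_ineq[of a1 "a2 * u"] u by (simp add: norm_mult)
  moreover have "max (cmod a1) (cmod a2) = cmod a1"
    using True norm_ge_zero[of a2] by (simp add: max_def, linarith)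
  moreover have "d/4 * cmod a1 \<le> 2/4 * cmod a1" using d(2) by (intro mult_right_mono) auto
  ultimately show ?thesis using True by (simp add: le_max_iff_disj)
next
  case False
  have "cmod a2 * d \<le> cmod a2 * cmod (u - w)" using sep by (simp add: mult_left_mono)
  also have "\<dots> = cmod ((a1 + a2 * u) - (a1 + a2 * w))" by (simp add: norm_mult[symmetric] algebra_simps)
  also have "\<dots> \<le> cmod (a1 + a2 * u) + cmod (a1 + a2 * w)" by (rule norm_triangle_ineq4)
  finally have "cmod a2 * d / 2 \<le> max (cmod (a1 + a2 * u)) (cmod (a1 + a2 * w))" by linarith
  moreover have "d/4 * max (cmod a1) (cmod a2) \<le> cmod a2 * d / 2"
  proof -
    have "max (cmod a1) (cmod a2) \<le> 2 * cmod a2" using False by simp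
    then have "d/4 * max (cmod a1) (cmod a2) \<le> d/4 * (2 * cmod a2)"
      using d by (intro mult_left_mono) auto
    then show ?thesis by (simp add: mult_ac)
  qed
  ultimately show ?thesis by linarith
qed

lemma unit_points_all_but_one_far:
  fixes z :: "nat \<Rightarrow> complex"
  assumes unit: "\<And>j. cmod (z j) = 1"
    and sep: "\<And>i j. i < K \<Longrightarrow> j < K \<Longrightarrow> i \<noteq> j \<Longrightarrow> d \<le> cmod (z i - z j)"
    and d: "0 \<le> d" "d \<le> 2"
  shows "\<exists>j0. \<forall>j<K. j \<noteq> j0 \<longrightarrow> d/4 * max (cmod a1) (cmod a2) \<le> cmod (a1 + a2 * z j)"
proof (cases "\<exists>j0<K. cmod (a1 + a2 * z j0) < d/4 * max (cmod a1) (cmod a2)")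
  case True
  then obtain j0 where j0: "j0 < K" "cmod (a1 + a2 * z j0) < d/4 * max (cmod a1) (cmod a2)" by blast
  have "d/4 * max (cmod a1) (cmod a2) \<le> cmod (a1 + a2 * z j)" if "j < K" "j \<noteq> j0" for j
    using unit_pair_far[OF unit unit sep[OF that(1) j0(1) that(2)] d, of a1 a2] j0(2) by linarith
  then show ?thesis by blast
next
  case False
  then show ?thesis by (meson not_less)
qed

lemma sum_all_but_one_ge:
  fixes g :: "nat \<Rightarrow> real"
  assumes nonneg: "\<And>j. 0 \<le> g j" and big: "\<And>j. j < K \<Longrightarrow> j \<noteq> j0 \<Longrightarrow> B \<le> g j" and B: "0 \<le> B"
  shows "(real K - 1) * B \<le> (\<Sum>j<K. g j)"
proof -
  let ?S = "{..<K} - {j0}"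
  have "real K - 1 \<le> real (card ?S)" using card_Diff_singleton_if[of "{..<K}" j0] by auto
  then have "(real K - 1) * B \<le> (\<Sum>j\<in>?S. B)" using B by (simp add: mult_right_mono)
  also have "\<dots> \<le> (\<Sum>j\<in>?S. g j)" by (intro sum_mono big) auto
  also have "\<dots> \<le> (\<Sum>j<K. g j)" by (intro sum_mono2) (auto simp: nonneg)
  finally show ?thesis .
qed

lemma separated_samples_log_sum:
  fixes z :: "nat \<Rightarrow> complex" and \<rho> d :: real
  assumes unit: "\<And>j. cmod (z j) = 1"
    and sep: "\<And>i j. i < K \<Longrightarrow> j < K \<Longrightarrow> i \<noteq> j \<Longrightarrow> d \<le> cmod (z i - z j)"
    and d: "0 \<le> d" "d \<le> 2" and \<rho>: "0 \<le> \<rho>"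
  shows "(real K - 1) * ln (1 + \<rho> * (d/4)\<^sup>2 * (max (cmod a1) (cmod a2))\<^sup>2)
           \<le> (\<Sum>j<K. ln (1 + \<rho> * (cmod (a1 + a2 * z j))\<^sup>2))"
proof -
  have "\<exists>j0. \<forall>j<K. j \<noteq> j0 \<longrightarrow> d/4 * max (cmod a1) (cmod a2) \<le> cmod (a1 + a2 * z j)"
    using unit sep d by (rule unit_points_all_but_one_far)
  then obtain j0 where j0: "\<forall>j<K. j \<noteq> j0 \<longrightarrow> d/4 * max (cmod a1) (cmod a2) \<le> cmod (a1 + a2 * z j)"
    by blast
  have "ln (1 + \<rho> * (d/4)\<^sup>2 * (max (cmod a1) (cmod a2))\<^sup>2) \<le> ln (1 + \<rho> * (cmod (a1 + a2 * z j))\<^sup>2)"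
    if "j < K" "j \<noteq> j0" for j
  proof -
    have "(d/4)\<^sup>2 * (max (cmod a1) (cmod a2))\<^sup>2 \<le> (cmod (a1 + a2 * z j))\<^sup>2"
      unfolding power_mult_distrib[symmetric]
      using j0 that d by (intro power_mono) (auto simp: le_max_iff_disj)
    then have "\<rho> * (d/4)\<^sup>2 * (max (cmod a1) (cmod a2))\<^sup>2 \<le> \<rho> * (cmod (a1 + a2 * z j))\<^sup>2"
      using \<rho> by (metis mult.assoc mult_left_mono)
    moreover have "0 \<le> \<rho> * (d/4)\<^sup>2 * (max (cmod a1) (cmod a2))\<^sup>2" using \<rho> by simp
    ultimately show ?thesis by simp
  qed
  then show ?thesis using \<rho> by (intro sum_all_but_one_ge) auto
qed

lemma integral_ge_average_of_shifts:
  fixes g :: "real \<Rightarrow> real" and K :: nat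
  assumes cont: "continuous_on UNIV g" and nonneg: "\<And>x. 0 \<le> g x"
    and \<sigma>: "0 \<le> \<sigma>" and ab: "a + real K * \<sigma> \<le> b"
    and shifts: "\<And>x. B \<le> (\<Sum>j<K. g (x + real j * \<sigma>))"
  shows "(b - a - real K * \<sigma>) * B \<le> real K * integral {a..b} g"
proof -
  define b' where "b' = b - real K * \<sigma>"
  have "a \<le> b'" using ab by (simp add: b'_def)
  have shift_integrable: "(\<lambda>x. g (real j * \<sigma> + x)) integrable_on {a..b'}" for j
    by (intro integrable_continuous_interval continuous_on_compose2[OF cont] continuous_intros) auto
  have shift_le: "integral {a..b'} (\<lambda>x. g (real j * \<sigma> + x)) \<le> integral {a..b} g" if "j < K" for j
  proof -
    have "integral {a..b'} (\<lambda>x. g (real j * \<sigma> + x)) = integral {a + real j * \<sigma>..b' + real j * \<sigma>} g"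
      using integral_shift_Icc_real[of a b' g "real j * \<sigma>"] by (simp add: o_def)
    also have "\<dots> \<le> integral {a..b} g"
    proof (rule integral_subset_le)
      have "real j * \<sigma> \<le> real K * \<sigma>" using that \<sigma> by (intro mult_right_mono) auto
      then show "{a + real j * \<sigma>..b' + real j * \<sigma>} \<subseteq> {a..b}" using \<sigma> by (auto simp: b'_def)
    qed (auto simp: nonneg intro!: integrable_continuous_interval continuous_on_subset[OF cont])
    finally show ?thesis .
  qed
  have "(b - a - real K * \<sigma>) * B = integral {a..b'} (\<lambda>x. B)"
    using \<open>a \<le> b'\<close> by (simp add: b'_def)
  also have "\<dots> \<le> integral {a..b'} (\<lambda>x. \<Sum>j<K. g (real j * \<sigma> + x))"
    using shifts by (intro integral_le integrable_sum shift_integrable) (auto simp: add.commute)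
  also have "\<dots> = (\<Sum>j<K. integral {a..b'} (\<lambda>x. g (real j * \<sigma> + x)))"
    by (intro integral_sum shift_integrable) auto
  also have "\<dots> \<le> (\<Sum>j<K. integral {a..b} g)" by (intro sum_mono shift_le) auto
  finally show ?thesis by simp
qed

lemma frequency_diversity_K:
  fixes t1 t2 Bw :: real and K :: nat
  assumes t: "t1 \<noteq> t2" and K: "2 \<le> K" and Bw: "1 / (2 * real K * \<bar>t2 - t1\<bar>) \<le> Bw"
  shows "\<exists>c>0. c \<le> 1 \<and> (\<forall>\<rho>\<ge>0. \<forall>a1 a2.
           (Bw - 1 / (2 * real K * \<bar>t2 - t1\<bar>)) * ((real K - 1) / real K)
             * ln (1 + \<rho> * c * (max (cmod a1) (cmod a2))\<^sup>2)
           \<le> integral {-Bw/2..Bw/2}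
                (\<lambda>f. ln (1 + \<rho> * (cmod (a1 * cis (2*pi*f*t1) + a2 * cis (2*pi*f*t2)))\<^sup>2)))"
proof -
  define T where "T = t2 - t1"
  have T: "T \<noteq> 0" using t by (simp add: T_def)
  define \<sigma> where "\<sigma> = 1 / (2 * real K^2 * \<bar>T\<bar>)"
  have K\<sigma>: "real K * \<sigma> = 1 / (2 * real K * \<bar>T\<bar>)" using K by (simp add: \<sigma>_def power2_eq_square)
  have K\<sigma>_le: "real K * \<sigma> \<le> Bw" using Bw by (simp add: K\<sigma> T_def)
  obtain d where d: "0 < d" "d \<le> 2" and sep: "\<And>i j x. i < K \<Longrightarrow> j < K \<Longrightarrow> i \<noteq> j \<Longrightarrow>
      d \<le> cmod (cis (2*pi*(x + real i * \<sigma>)*T) - cis (2*pi*(x + real j * \<sigma>)*T))"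
  proof -
    have "0 < \<sigma> * \<bar>T\<bar>" using T K by (simp add: \<sigma>_def)
    moreover have "real K * \<sigma> * \<bar>T\<bar> \<le> 1" using T K by (simp add: K\<sigma>)
    ultimately show ?thesis using circle_points_separated that by blast
  qed
  define c where "c = (d/4)\<^sup>2"
  show ?thesis
  proof (intro exI[of _ c] conjI allI impI)
    show "0 < c" "c \<le> 1" using d by (auto simp: c_def power_le_one)
    fix \<rho> :: real and a1 a2 :: complex assume \<rho>: "0 \<le> \<rho>"
    define B where "B = ln (1 + \<rho> * c * (max (cmod a1) (cmod a2))\<^sup>2)"
    define g where "g f = ln (1 + \<rho> * (cmod (a1 * cis (2*pi*f*t1) + a2 * cis (2*pi*f*t2)))\<^sup>2)" for f
    have g_rel: "g f = ln (1 + \<rho> * (cmod (a1 + a2 * cis (2*pi*f*T)))\<^sup>2)" for f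
    proof -
      have "a1 * cis (2*pi*f*t1) + a2 * cis (2*pi*f*t2) = cis (2*pi*f*t1) * (a1 + a2 * cis (2*pi*f*T))"
        by (simp add: algebra_simps cis_mult T_def)
      then show ?thesis unfolding g_def by (simp add: norm_mult)
    qed
    have g_nonneg: "0 \<le> g f" for f unfolding g_def using \<rho> by simp
    have shifts: "(real K - 1) * B \<le> (\<Sum>j<K. g (x + real j * \<sigma>))" for x
      unfolding B_def g_rel c_def
      by (rule separated_samples_log_sum[where z = "\<lambda>j. cis (2*pi*(x + real j * \<sigma>)*T)"])
        (use sep d \<rho> in auto)
    have "continuous_on UNIV g" unfolding g_def
      using \<rho> by (intro continuous_intros) (auto simp: add_nonneg_eq_0_iff)
    then have main: "(Bw/2 - (-Bw/2) - real K * \<sigma>) * ((real K - 1) * B) \<le> real K * integral {-Bw/2..Bw/2} g"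
      using K\<sigma>_le by (intro integral_ge_average_of_shifts[OF _ g_nonneg _ _ shifts]) (auto simp: \<sigma>_def)
    have "(Bw - 1 / (2 * real K * \<bar>t2 - t1\<bar>)) * ((real K - 1) / real K) * B
        = (Bw - real K * \<sigma>) * ((real K - 1) * B) / real K"
      by (simp add: K\<sigma> T_def)
    also have "\<dots> \<le> integral {-Bw/2..Bw/2} g"
      using main K by (simp add: divide_le_eq mult.commute)
    finally show "(Bw - 1 / (2 * real K * \<bar>t2 - t1\<bar>)) * ((real K - 1) / real K) * B
        \<le> integral {-Bw/2..Bw/2} g" .
  qed
qed

(* The loss factor of frequency_diversity_K tends to 1 as the number K of samples grows. *)
lemma diversity_order_choice:
  fixes b \<kappa> :: real
  assumes b: "0 < b" and \<kappa>: "\<kappa> < 1"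
  shows "\<exists>K. \<kappa> < (1 - 1 / (2 * real K * b)) * ((real K - 1) / real K) \<and> 1 / (2 * real K * b) < 1 \<and> 2 \<le> K"
proof -
  have "((\<lambda>K::nat. (1 - 1 / (2 * real K * b)) * ((real K - 1) / real K)) \<longlongrightarrow> 1) at_top"
    using b by real_asymp
  then have ev_factor: "eventually (\<lambda>K. \<kappa> < (1 - 1 / (2 * real K * b)) * ((real K - 1) / real K)) sequentially"
    using \<kappa> by (rule order_tendstoD)
  have "((\<lambda>K::nat. 1 / (2 * real K * b)) \<longlongrightarrow> 0) at_top" using b by real_asymp
  then have ev_small: "eventually (\<lambda>K. 1 / (2 * real K * b) < 1) sequentially"
    by (rule order_tendstoD) simp
  have "eventually (\<lambda>K. \<kappa> < (1 - 1 / (2 * real K * b)) * ((real K - 1) / real K)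
      \<and> 1 / (2 * real K * b) < 1 \<and> 2 \<le> K) sequentially"
    using ev_factor ev_small eventually_ge_at_top[of 2] by eventually_elim blast
  then show ?thesis using eventually_happens'[OF sequentially_bot] by blast
qed

lemma frequency_diversity:
  fixes t1 t2 Bw \<kappa> :: real
  assumes t: "t1 \<noteq> t2" and Bw: "0 < Bw" and \<kappa>: "\<kappa> < 1"
  shows "\<exists>c>0. c \<le> 1 \<and> (\<forall>\<rho>\<ge>0. \<forall>a1 a2.
           Bw * \<kappa> * ln (1 + \<rho> * c * (max (cmod a1) (cmod a2))\<^sup>2)
           \<le> integral {-Bw/2..Bw/2}
                (\<lambda>f. ln (1 + \<rho> * (cmod (a1 * cis (2*pi*f*t1) + a2 * cis (2*pi*f*t2)))\<^sup>2)))"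
proof -
  define b where "b = \<bar>t2 - t1\<bar> * Bw"
  have b: "0 < b" using t Bw by (simp add: b_def)
  obtain K where K: "\<kappa> < (1 - 1 / (2 * real K * b)) * ((real K - 1) / real K)"
    "1 / (2 * real K * b) < 1" "2 \<le> K"
    using diversity_order_choice[OF b \<kappa>] by blast
  have scale: "Bw - 1 / (2 * real K * \<bar>t2 - t1\<bar>) = Bw * (1 - 1 / (2 * real K * b))"
    using Bw by (simp add: b_def field_simps)
  have "0 \<le> Bw * (1 - 1 / (2 * real K * b))" using K(2) Bw by simp
  then have shift_le: "1 / (2 * real K * \<bar>t2 - t1\<bar>) \<le> Bw" using scale by linarith
  obtain c where c: "0 < c" "c \<le> 1" and int_ge: "\<forall>\<rho>\<ge>0. \<forall>a1 a2.
      (Bw - 1 / (2 * real K * \<bar>t2 - t1\<bar>)) * ((real K - 1) / real K)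
        * ln (1 + \<rho> * c * (max (cmod a1) (cmod a2))\<^sup>2)
      \<le> integral {-Bw/2..Bw/2} (\<lambda>f. ln (1 + \<rho> * (cmod (a1 * cis (2*pi*f*t1) + a2 * cis (2*pi*f*t2)))\<^sup>2))"
    using frequency_diversity_K[OF t K(3) shift_le] by (elim exE conjE) (rule that)
  show ?thesis
  proof (intro exI[of _ c] conjI c allI impI)
    fix \<rho> :: real and a1 a2 :: complex assume \<rho>: "0 \<le> \<rho>"
    have "0 \<le> ln (1 + \<rho> * c * (max (cmod a1) (cmod a2))\<^sup>2)" using \<rho> c by simp
    then have "Bw * \<kappa> * ln (1 + \<rho> * c * (max (cmod a1) (cmod a2))\<^sup>2)
        \<le> Bw * ((1 - 1 / (2 * real K * b)) * ((real K - 1) / real K)) * ln (1 + \<rho> * c * (max (cmod a1) (cmod a2))\<^sup>2)"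
      using K(1) Bw by (intro mult_right_mono mult_left_mono) auto
    also have "\<dots> = (Bw - 1 / (2 * real K * \<bar>t2 - t1\<bar>)) * ((real K - 1) / real K)
        * ln (1 + \<rho> * c * (max (cmod a1) (cmod a2))\<^sup>2)"
      unfolding scale by (simp only: mult.assoc)
    also have "\<dots> \<le> integral {-Bw/2..Bw/2} (\<lambda>f. ln (1 + \<rho> * (cmod (a1 * cis (2*pi*f*t1) + a2 * cis (2*pi*f*t2)))\<^sup>2))"
      using int_ge \<rho> by blast
    finally show "Bw * \<kappa> * ln (1 + \<rho> * c * (max (cmod a1) (cmod a2))\<^sup>2)
        \<le> integral {-Bw/2..Bw/2} (\<lambda>f. ln (1 + \<rho> * (cmod (a1 * cis (2*pi*f*t1) + a2 * cis (2*pi*f*t2)))\<^sup>2))" .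
  qed
qed

section \<open>The mutual information of the scheme\<close>

(* The squared gain below which a link of SNR rho cannot carry rate R, i.e.
   (1/2) ln (1 + rho x) < R exactly when x < outage_level rho R. *)
definition outage_level :: "real \<Rightarrow> real \<Rightarrow> real" where
  "outage_level \<rho> R = (exp (2 * R) - 1) / \<rho>"

lemma half_ln_ge_iff:
  assumes \<rho>: "0 < \<rho>" and x: "0 \<le> x"
  shows "R \<le> 1/2 * ln (1 + \<rho> * x) \<longleftrightarrow> outage_level \<rho> R \<le> x"
proof -
  have "0 < 1 + \<rho> * x" using \<rho> x by (simp add: add_pos_nonneg)
  then have "R \<le> 1/2 * ln (1 + \<rho> * x) \<longleftrightarrow> exp (2 * R) \<le> 1 + \<rho> * x" by (simp add: ln_ge_iff mult.commute)
  also have "\<dots> \<longleftrightarrow> outage_level \<rho> R \<le> x"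
    using \<rho> by (simp add: outage_level_def divide_le_eq mult.commute, linarith)
  finally show ?thesis .
qed

lemma outage_level_pos: "0 < \<rho> \<Longrightarrow> 0 < R \<Longrightarrow> 0 < outage_level \<rho> R"
  by (simp add: outage_level_def)

lemma outage_level_mono:
  assumes "0 < \<rho>'" "\<rho>' \<le> \<rho>" "0 \<le> R" "R \<le> R'"
  shows "outage_level \<rho> R \<le> outage_level \<rho>' R'"
proof -
  have "(exp (2 * R) - 1) / \<rho> \<le> (exp (2 * R) - 1) / \<rho>'"
    using assms by (intro divide_left_mono) auto
  also have "\<dots> \<le> (exp (2 * R') - 1) / \<rho>'" using assms by (intro divide_right_mono) auto
  finally show ?thesis by (simp add: outage_level_def)
qed

lemma dec_set_eq:
  assumes "0 < rho0 snr"
  shows "dec_set snr Rt a = {k \<in> {R1, R2}. outage_level (rho0 snr) Rt \<le> (cmod (a S k))\<^sup>2}"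
  unfolding dec_set_def using half_ln_ge_iff[OF assms] by auto

lemma dec_set_cases:
  fixes Rt :: real
  assumes "0 < rho0 snr"
  defines "v \<equiv> outage_level (rho0 snr) Rt"
  shows "(dec_set snr Rt a = {} \<and> (cmod (a S R1))\<^sup>2 < v \<and> (cmod (a S R2))\<^sup>2 < v)
       \<or> (dec_set snr Rt a = {R1} \<and> (cmod (a S R2))\<^sup>2 < v)
       \<or> (dec_set snr Rt a = {R2} \<and> (cmod (a S R1))\<^sup>2 < v)
       \<or> dec_set snr Rt a = {R1, R2}"
  unfolding dec_set_eq[OF assms(1)] v_def[symmetric] by (auto simp: not_le)

definition relay_info :: "real \<Rightarrow> (node \<Rightarrow> real) \<Rightarrow> real \<Rightarrow> node set \<Rightarrow> (node \<Rightarrow> node \<Rightarrow> complex) \<Rightarrow> real" where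
  "relay_info Bw tau \<rho> K a = 1 / (2 * Bw) * integral {-Bw/2..Bw/2}
     (\<lambda>f. ln (1 + \<rho> * (cmod (\<Sum>k\<in>K. a k D * cis (2 * pi * f * tau k)))\<^sup>2))"

lemma I_TDA_split:
  "I_TDA Bw tau snr Rt a
     = 1/2 * ln (1 + rho0 snr * (cmod (a S D))\<^sup>2) + relay_info Bw tau (rho0 snr) (dec_set snr Rt a) a"
  by (simp add: I_TDA_def relay_info_def)

lemma relay_info_nonneg:
  assumes "0 < Bw" and "0 \<le> \<rho>"
  shows "0 \<le> relay_info Bw tau \<rho> K a"
proof -
  let ?g = "\<lambda>f. ln (1 + \<rho> * (cmod (\<Sum>k\<in>K. a k D * cis (2 * pi * f * tau k)))\<^sup>2)"
  have "continuous_on {-Bw/2..Bw/2} ?g"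
    using assms by (intro continuous_intros) (auto simp: add_nonneg_eq_0_iff)
  then have "0 \<le> integral {-Bw/2..Bw/2} ?g"
    using assms by (intro integral_nonneg integrable_continuous_interval) auto
  then show ?thesis unfolding relay_info_def using assms by simp
qed

lemma relay_info_empty: "relay_info Bw tau \<rho> {} a = 0"
  by (simp add: relay_info_def)

lemma relay_info_single:
  assumes "0 < Bw"
  shows "relay_info Bw tau \<rho> {k} a = 1/2 * ln (1 + \<rho> * (cmod (a k D))\<^sup>2)"
  using assms by (simp add: relay_info_def norm_mult)

lemma relay_info_pair:
  assumes Bw: "0 < Bw"
    and freq: "Bw * \<kappa> * ln (1 + \<rho> * c * (max (cmod (a R1 D)) (cmod (a R2 D)))\<^sup>2)
      \<le> integral {-Bw/2..Bw/2} (\<lambda>f. ln (1 + \<rho> *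
           (cmod (a R1 D * cis (2*pi*f*tau R1) + a R2 D * cis (2*pi*f*tau R2)))\<^sup>2))"
  shows "\<kappa> / 2 * ln (1 + \<rho> * c * (max (cmod (a R1 D)) (cmod (a R2 D)))\<^sup>2)
           \<le> relay_info Bw tau \<rho> {R1, R2} a"
proof -
  have "\<kappa> / 2 * ln (1 + \<rho> * c * (max (cmod (a R1 D)) (cmod (a R2 D)))\<^sup>2)
      = 1 / (2 * Bw) * (Bw * \<kappa> * ln (1 + \<rho> * c * (max (cmod (a R1 D)) (cmod (a R2 D)))\<^sup>2))"
    using Bw by simp
  also have "\<dots> \<le> relay_info Bw tau \<rho> {R1, R2} a"
    unfolding relay_info_def using freq Bw by (intro mult_left_mono) (auto simp: mult.assoc)
  finally show ?thesis .
qed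

lemma I_TDA_outage_if_weak_source_links:
  assumes \<rho>: "0 < rho0 snr"
    and weak: "(cmod (a S R1))\<^sup>2 < outage_level (rho0 snr) Rt" "(cmod (a S R2))\<^sup>2 < outage_level (rho0 snr) Rt"
      "(cmod (a S D))\<^sup>2 < outage_level (rho0 snr) Rt"
  shows "I_TDA Bw tau snr Rt a < Rt"
proof -
  have "dec_set snr Rt a = {}" unfolding dec_set_eq[OF \<rho>] using weak by auto
  then have "I_TDA Bw tau snr Rt a = 1/2 * ln (1 + rho0 snr * (cmod (a S D))\<^sup>2)"
    by (simp add: I_TDA_split relay_info_empty)
  also have "\<dots> < Rt" using half_ln_ge_iff[OF \<rho>, of "(cmod (a S D))\<^sup>2" Rt] weak(3) by simp
  finally show ?thesis .
qed

lemma I_TDA_outage_cases: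
  fixes Rt :: real
  assumes \<rho>: "0 < rho0 snr" and Bw: "0 < Bw" and \<kappa>: "0 < \<kappa>" and c: "0 < c"
    and freq: "Bw * \<kappa> * ln (1 + rho0 snr * c * (max (cmod (a R1 D)) (cmod (a R2 D)))\<^sup>2)
      \<le> integral {-Bw/2..Bw/2} (\<lambda>f. ln (1 + rho0 snr *
           (cmod (a R1 D * cis (2*pi*f*tau R1) + a R2 D * cis (2*pi*f*tau R2)))\<^sup>2))"
    and out: "I_TDA Bw tau snr Rt a < Rt"
  defines "v \<equiv> outage_level (rho0 snr) Rt" and "w \<equiv> outage_level (rho0 snr * c) (Rt / \<kappa>)"
  shows "(cmod (a S D))\<^sup>2 < v \<and>
     (((cmod (a S R1))\<^sup>2 < v \<and> (cmod (a S R2))\<^sup>2 < v) \<or>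
      ((cmod (a S R2))\<^sup>2 < v \<and> (cmod (a R1 D))\<^sup>2 < v) \<or>
      ((cmod (a S R1))\<^sup>2 < v \<and> (cmod (a R2 D))\<^sup>2 < v) \<or>
      ((cmod (a R1 D))\<^sup>2 < w \<and> (cmod (a R2 D))\<^sup>2 < w))"
proof -
  let ?K = "dec_set snr Rt a"
  have relay_ge: "0 \<le> relay_info Bw tau (rho0 snr) ?K a" using relay_info_nonneg Bw \<rho> by simp
  have direct_ge: "0 \<le> 1/2 * ln (1 + rho0 snr * (cmod (a S D))\<^sup>2)" using \<rho> by simp
  have weak: "(cmod x)\<^sup>2 < v" if "1/2 * ln (1 + rho0 snr * (cmod x)\<^sup>2) < Rt" for x
    using half_ln_ge_iff[OF \<rho>, of "(cmod x)\<^sup>2" Rt] that unfolding v_def by (simp add: not_le)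
  have direct: "(cmod (a S D))\<^sup>2 < v"
    using out relay_ge by (intro weak) (simp add: I_TDA_split)
  have relay: "relay_info Bw tau (rho0 snr) ?K a < Rt"
    using out direct_ge by (simp add: I_TDA_split)
  have single: "(cmod (a k D))\<^sup>2 < v" if "?K = {k}" for k
    using relay that by (intro weak) (simp add: relay_info_single[OF Bw])
  have pair: "(cmod (a R1 D))\<^sup>2 < w \<and> (cmod (a R2 D))\<^sup>2 < w" if "?K = {R1, R2}"
  proof -
    let ?m = "(max (cmod (a R1 D)) (cmod (a R2 D)))\<^sup>2"
    have "\<kappa> / 2 * ln (1 + rho0 snr * c * ?m) < Rt"
      using relay_info_pair[where a=a and tau=tau, OF Bw freq] relay that by simp
    then have "1/2 * ln (1 + (rho0 snr * c) * ?m) < Rt / \<kappa>" using \<kappa> by (simp add: field_simps)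
    then have "?m < w" unfolding w_def using half_ln_ge_iff[of "rho0 snr * c" ?m "Rt / \<kappa>"] \<rho> c by force
    moreover have "(cmod (a R1 D))\<^sup>2 \<le> ?m" "(cmod (a R2 D))\<^sup>2 \<le> ?m"
      by (auto intro!: power_mono)
    ultimately show ?thesis by linarith
  qed
  show ?thesis
    using dec_set_cases[OF \<rho>, of Rt a] single pair direct unfolding v_def by blast
qed

lemma cis_borel_measurable [measurable]: "cis \<in> borel_measurable borel"
  by (intro borel_measurable_continuous_onI) (simp add: cis_conv_exp continuous_intros)

(* I_TDA is measurable in the gains: the decoding set is encoded by measurable masks and the
   band integral becomes a Lebesgue integral of a jointly measurable integrand. *)
lemma I_TDA_measurable:
  fixes \<alpha> :: "node \<Rightarrow> node \<Rightarrow> 'w \<Rightarrow> complex"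
  assumes meas: "\<And>i j. (i, j) \<in> links \<Longrightarrow> \<alpha> i j \<in> borel_measurable M" and \<rho>: "0 \<le> rho0 snr"
  shows "(\<lambda>\<omega>. I_TDA Bw tau snr Rt (\<lambda>i j. \<alpha> i j \<omega>)) \<in> borel_measurable M"
proof -
  have [measurable]: "\<alpha> S R1 \<in> borel_measurable M" "\<alpha> S R2 \<in> borel_measurable M" "\<alpha> S D \<in> borel_measurable M"
     "\<alpha> R1 D \<in> borel_measurable M" "\<alpha> R2 D \<in> borel_measurable M"
    by (auto intro!: meas simp: links_def)
  define P where "P k \<omega> \<longleftrightarrow> Rt \<le> 1/2 * ln (1 + rho0 snr * (cmod (\<alpha> S k \<omega>))\<^sup>2)" for k \<omega>
  define b where "b k \<omega> = (if P k \<omega> then \<alpha> k D \<omega> else 0)" for k \<omega>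
  have [measurable]: "b R1 \<in> borel_measurable M" "b R2 \<in> borel_measurable M"
    unfolding b_def P_def by measurable
  define H where "H \<omega> f = ln (1 + rho0 snr *
      (cmod (b R1 \<omega> * cis (2*pi*f*tau R1) + b R2 \<omega> * cis (2*pi*f*tau R2)))\<^sup>2)" for \<omega> f
  have sum_eq: "(\<Sum>k\<in>dec_set snr Rt (\<lambda>i j. \<alpha> i j \<omega>). \<alpha> k D \<omega> * cis (2*pi*f*tau k))
      = b R1 \<omega> * cis (2*pi*f*tau R1) + b R2 \<omega> * cis (2*pi*f*tau R2)" for \<omega> f
  proof -
    have "dec_set snr Rt (\<lambda>i j. \<alpha> i j \<omega>) = {k \<in> {R1, R2}. P k \<omega>}" by (simp add: dec_set_def P_def)
    also have "\<dots> = (if P R1 \<omega> \<and> P R2 \<omega> then {R1, R2} else if P R1 \<omega> then {R1}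
       else if P R2 \<omega> then {R2} else {})" by auto
    finally show ?thesis unfolding b_def by auto
  qed
  have H_cont: "continuous_on {-Bw/2..Bw/2} (H \<omega>)" for \<omega>
    unfolding H_def using \<rho> by (intro continuous_intros) (auto simp: add_nonneg_eq_0_iff)
  have "integral {-Bw/2..Bw/2} (H \<omega>) = (\<integral>f. indicator {-Bw/2..Bw/2} f *\<^sub>R H \<omega> f \<partial>lborel)" for \<omega>
    using set_borel_integral_eq_integral(2)[OF borel_integrable_atLeastAtMost'[OF H_cont]]
    by (simp add: set_lebesgue_integral_def)
  then have eq: "I_TDA Bw tau snr Rt (\<lambda>i j. \<alpha> i j \<omega>) = 1/2 * ln (1 + rho0 snr * (cmod (\<alpha> S D \<omega>))\<^sup>2)
      + 1/(2*Bw) * (\<integral>f. indicator {-Bw/2..Bw/2} f *\<^sub>R H \<omega> f \<partial>lborel)" for \<omega>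
    unfolding I_TDA_def sum_eq H_def[symmetric] by simp
  show ?thesis unfolding eq H_def by measurable
qed

section \<open>Exponents of functions of the SNR\<close>

lemma ln_ratio_scale_power:
  fixes f :: "real \<Rightarrow> real"
  assumes f: "((\<lambda>x. ln (f x) / ln x) \<longlongrightarrow> e) at_top" and pos: "eventually (\<lambda>x. 0 < f x) at_top"
    and C: "0 < C"
  shows "((\<lambda>x. ln (C * f x ^ n) / ln x) \<longlongrightarrow> real n * e) at_top"
proof -
  have "((\<lambda>x. ln C / ln x + real n * (ln (f x) / ln x)) \<longlongrightarrow> 0 + real n * e) at_top"
    by (intro tendsto_intros f tendsto_divide_0[OF tendsto_const] filterlim_at_top_imp_at_infinity ln_at_top)
  moreover have "eventually (\<lambda>x. ln C / ln x + real n * (ln (f x) / ln x) = ln (C * f x ^ n) / ln x) at_top"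
    using pos by eventually_elim (use C in \<open>auto simp: ln_mult ln_realpow add_divide_distrib\<close>)
  ultimately show ?thesis by (simp add: Lim_transform_eventually)
qed

lemma ln_ratio_mult:
  fixes f g :: "real \<Rightarrow> real"
  assumes f: "((\<lambda>x. ln (f x) / ln x) \<longlongrightarrow> a) at_top" and g: "((\<lambda>x. ln (g x) / ln x) \<longlongrightarrow> b) at_top"
    and pos: "eventually (\<lambda>x. 0 < f x \<and> 0 < g x) at_top"
  shows "((\<lambda>x. ln (f x * g x) / ln x) \<longlongrightarrow> a + b) at_top"
proof -
  have "((\<lambda>x. ln (f x) / ln x + ln (g x) / ln x) \<longlongrightarrow> a + b) at_top" by (intro tendsto_intros f g)
  moreover have "eventually (\<lambda>x. ln (f x) / ln x + ln (g x) / ln x = ln (f x * g x) / ln x) at_top"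
    using pos by eventually_elim (simp add: ln_mult add_divide_distrib)
  ultimately show ?thesis by (simp add: Lim_transform_eventually)
qed

lemma neg_ln_ratio_less:
  fixes L P :: "real \<Rightarrow> real"
  assumes bound: "eventually (\<lambda>x. 0 < L x \<and> L x \<le> P x) at_top"
    and L: "((\<lambda>x. ln (L x) / ln x) \<longlongrightarrow> l) at_top" and a: "- l < a"
  shows "eventually (\<lambda>x. - ln (P x) / ln x < a) at_top"
proof -
  have "eventually (\<lambda>x. - a < ln (L x) / ln x) at_top" using L a by (intro order_tendstoD) auto
  then show ?thesis using bound eventually_gt_at_top[of 1]
  proof eventually_elim
    case (elim x)
    then have "ln (L x) / ln x \<le> ln (P x) / ln x" by (intro divide_right_mono) auto
    then show ?case using elim(1) by (simp add: minus_divide_left[symmetric])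
  qed
qed

lemma neg_ln_ratio_greater:
  fixes U P :: "real \<Rightarrow> real"
  assumes bound: "eventually (\<lambda>x. 0 < P x \<and> P x \<le> U x) at_top"
    and U: "((\<lambda>x. ln (U x) / ln x) \<longlongrightarrow> u) at_top" and a: "a < - u"
  shows "eventually (\<lambda>x. a < - ln (P x) / ln x) at_top"
proof -
  have "eventually (\<lambda>x. ln (U x) / ln x < - a) at_top" using U a by (intro order_tendstoD) auto
  then show ?thesis using bound eventually_gt_at_top[of 1]
  proof eventually_elim
    case (elim x)
    then have "ln (P x) / ln x \<le> ln (U x) / ln x" by (intro divide_right_mono) auto
    then show ?case using elim(1) by (simp add: minus_divide_left[symmetric])
  qed
qed

lemma outage_level_asymptotics:
  fixes q c \<sigma> :: real
  assumes "0 < q" "0 < c" "0 < \<sigma>"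
  shows outage_level_exponent: "((\<lambda>x. ln (outage_level (c * x) (q * ln (1 + x * \<sigma>))) / ln x) \<longlongrightarrow> 2 * q - 1) at_top"
    and outage_level_vanishes: "q < 1/2 \<Longrightarrow> ((\<lambda>x. outage_level (c * x) (q * ln (1 + x * \<sigma>))) \<longlongrightarrow> 0) at_top"
  using assms unfolding outage_level_def by real_asymp+

lemma exponent_gap:
  fixes r a :: real
  assumes r: "0 < r" and a: "a < 3 * (1 - 2 * r)"
  shows "\<exists>\<kappa>. 0 < \<kappa> \<and> \<kappa> < 1 \<and> a < 3 - 2 * r - 4 * r / \<kappa>"
proof -
  define g where "g = 3 - 2 * r - a"
  have g: "4 * r < g" using a by (simp add: g_def)
  define \<kappa> where "\<kappa> = (1 + 4 * r / g) / 2"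
  have q: "0 < 4 * r / g" "4 * r / g < 1" using r g by auto
  then have \<kappa>: "0 < \<kappa>" "\<kappa> < 1" "4 * r / g < \<kappa>" by (auto simp: \<kappa>_def)
  then have "4 * r < \<kappa> * g" using g r by (simp add: divide_less_eq mult.commute)
  then have "4 * r / \<kappa> < g" using \<kappa> by (simp add: divide_less_eq mult.commute)
  then show ?thesis using \<kappa> by (intro exI[of _ \<kappa>]) (auto simp: g_def)
qed

section \<open>Outage probability of the random network\<close>

lemma links_eq: "links = {(S,R1), (S,R2), (S,D), (R1,R2), (R1,D), (R2,R1), (R2,D)}"
  unfolding links_def by auto

locale rayleigh_network = prob_space M for M :: "'w measure" +
  fixes \<alpha> :: "node \<Rightarrow> node \<Rightarrow> 'w \<Rightarrow> complex" and s2 :: "node \<Rightarrow> node \<Rightarrow> real"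
  assumes gains_indep: "indep_vars (\<lambda>_. borel) (\<lambda>p. \<alpha> (fst p) (snd p)) links"
    and var_pos: "\<forall>(i,j)\<in>links. s2 i j > 0"
    and gains_gauss: "\<forall>(i,j)\<in>links. distributed M lborel (\<alpha> i j) (\<lambda>z. ennreal (cgauss_density (s2 i j) z))"
begin

definition var_min :: real where "var_min = Min ((\<lambda>(i,j). s2 i j) ` links)"
definition var_max :: real where "var_max = Max ((\<lambda>(i,j). s2 i j) ` links)"

lemma var_bounds:
  assumes "(i, j) \<in> links"
  shows "0 < var_min" and "var_min \<le> s2 i j" and "s2 i j \<le> var_max"
proof -
  have fin: "finite ((\<lambda>(i,j). s2 i j) ` links)" by (simp add: links_eq)
  show "0 < var_min" unfolding var_min_def using var_pos fin by (subst Min_gr_iff) (auto simp: links_eq)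
  show "var_min \<le> s2 i j" "s2 i j \<le> var_max"
    unfolding var_min_def var_max_def using fin assms by (auto intro: Min_le Max_ge)
qed

lemma gain_measurable: "(i, j) \<in> links \<Longrightarrow> \<alpha> i j \<in> borel_measurable M"
  using gains_gauss distributed_measurable by fastforce

definition gain_below :: "node \<times> node \<Rightarrow> real \<Rightarrow> 'w set" where
  "gain_below l t = {\<omega> \<in> space M. (cmod (\<alpha> (fst l) (snd l) \<omega>))\<^sup>2 < t}"

lemma
  assumes l: "l \<in> links" and t: "0 \<le> t"
  shows gain_below_sets: "gain_below l t \<in> events"
    and prob_gain_below_le: "prob (gain_below l t) \<le> t / var_min"
    and prob_gain_below_ge: "t \<le> var_min \<Longrightarrow> t / (exp 1 * var_max) \<le> prob (gain_below l t)"
proof -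
  obtain i j where ij: "l = (i, j)" by force
  have s: "0 < s2 i j" using var_pos l ij by auto
  have dist: "distributed M lborel (\<alpha> i j) (\<lambda>z. ennreal (cgauss_density (s2 i j) z))"
    using gains_gauss l ij by auto
  note ball = cgauss_small_ball[OF prob_space_axioms dist s t]
  show "gain_below l t \<in> events" using ball(1) by (simp add: gain_below_def ij)
  have "t / s2 i j \<le> t / var_min" using var_bounds[of i j] l ij t by (intro divide_left_mono) auto
  then show "prob (gain_below l t) \<le> t / var_min" using ball(2) by (simp add: gain_below_def ij)
  assume "t \<le> var_min"
  then have "t \<le> s2 i j" using var_bounds(2)[of i j] l ij by simp
  moreover have "t / (exp 1 * var_max) \<le> t / (exp 1 * s2 i j)"
    using var_bounds[of i j] l ij t s by (intro divide_left_mono mult_left_mono) auto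
  ultimately show "t / (exp 1 * var_max) \<le> prob (gain_below l t)"
    using ball(3) by (simp add: gain_below_def ij)
qed

lemma prob_gain_below_indep3:
  assumes l: "l1 \<in> links" "l2 \<in> links" "l3 \<in> links" "l1 \<noteq> l2" "l1 \<noteq> l3" "l2 \<noteq> l3"
  shows "prob (gain_below l1 t1 \<inter> gain_below l2 t2 \<inter> gain_below l3 t3)
       = prob (gain_below l1 t1) * prob (gain_below l2 t2) * prob (gain_below l3 t3)"
proof -
  define X where "X p = \<alpha> (fst p) (snd p)" for p
  define A where "A t = {z::complex. (cmod z)\<^sup>2 < t}" for t
  have A: "A t \<in> sets borel" for t
  proof -
    have "open (A t)" unfolding A_def by (intro open_Collect_less continuous_intros)
    then show ?thesis by simp
  qed
  define T where "T p = (if p = l1 then t1 else if p = l2 then t2 else t3)" for p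
  have gain_X: "gain_below p t = X p -` A t \<inter> space M" for p t
    unfolding gain_below_def X_def A_def by auto
  have "prob (\<Inter>p\<in>{l1,l2,l3}. X p -` A (T p) \<inter> space M) = (\<Prod>p\<in>{l1,l2,l3}. prob (X p -` A (T p) \<inter> space M))"
    using gains_indep l A unfolding X_def by (intro indep_varsD) auto
  moreover have "T l1 = t1" "T l2 = t2" "T l3 = t3" using l by (auto simp: T_def)
  ultimately show ?thesis using l by (simp add: gain_X Int_assoc mult.assoc)
qed

lemma prob_gain_below_triple:
  assumes l: "l1 \<in> links" "l2 \<in> links" "l3 \<in> links" "l1 \<noteq> l2" "l1 \<noteq> l3" "l2 \<noteq> l3"
    and t: "0 \<le> t1" "0 \<le> t2" "0 \<le> t3"
  shows "prob (gain_below l1 t1 \<inter> gain_below l2 t2 \<inter> gain_below l3 t3) \<le> t1 * t2 * t3 / var_min ^ 3"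
    and "t1 \<le> var_min \<Longrightarrow> t2 \<le> var_min \<Longrightarrow> t3 \<le> var_min \<Longrightarrow>
         t1 * t2 * t3 / (exp 1 * var_max) ^ 3 \<le> prob (gain_below l1 t1 \<inter> gain_below l2 t2 \<inter> gain_below l3 t3)"
proof -
  have vmin: "0 < var_min" and vmax: "0 < var_max" using var_bounds[of S D] by (auto simp: links_def)
  note prod = prob_gain_below_indep3[OF l]
  have "prob (gain_below l1 t1) * prob (gain_below l2 t2) * prob (gain_below l3 t3)
      \<le> (t1 / var_min) * (t2 / var_min) * (t3 / var_min)"
    using l t vmin by (intro mult_mono prob_gain_below_le) auto
  then show "prob (gain_below l1 t1 \<inter> gain_below l2 t2 \<inter> gain_below l3 t3) \<le> t1 * t2 * t3 / var_min ^ 3"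
    by (simp add: prod power3_eq_cube)
  assume "t1 \<le> var_min" "t2 \<le> var_min" "t3 \<le> var_min"
  then have "(t1 / (exp 1 * var_max)) * (t2 / (exp 1 * var_max)) * (t3 / (exp 1 * var_max))
      \<le> prob (gain_below l1 t1) * prob (gain_below l2 t2) * prob (gain_below l3 t3)"
    using l t vmax by (intro mult_mono prob_gain_below_ge) auto
  then show "t1 * t2 * t3 / (exp 1 * var_max) ^ 3 \<le> prob (gain_below l1 t1 \<inter> gain_below l2 t2 \<inter> gain_below l3 t3)"
    by (simp add: prod power3_eq_cube)
qed

definition outage_event :: "real \<Rightarrow> (node \<Rightarrow> real) \<Rightarrow> real \<Rightarrow> real \<Rightarrow> 'w set" where
  "outage_event Bw tau r snr = {\<omega> \<in> space M.
     I_TDA Bw tau snr (target_rate r (s2 S D) snr) (\<lambda>i j. \<alpha> i j \<omega>) < target_rate r (s2 S D) snr}"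

definition threshold :: "real \<Rightarrow> real \<Rightarrow> real" where
  "threshold r snr = outage_level (rho0 snr) (target_rate r (s2 S D) snr)"

lemma outage_TDA_eq: "outage_TDA M \<alpha> s2 Bw tau r snr = prob (outage_event Bw tau r snr)"
  by (simp add: outage_TDA_def outage_event_def)

lemma outage_event_sets:
  assumes "0 < snr"
  shows "outage_event Bw tau r snr \<in> events"
proof -
  have [measurable]: "(\<lambda>\<omega>. I_TDA Bw tau snr (target_rate r (s2 S D) snr) (\<lambda>i j. \<alpha> i j \<omega>)) \<in> borel_measurable M"
    using assms by (intro I_TDA_measurable gain_measurable) (auto simp: rho0_def)
  show ?thesis unfolding outage_event_def by measurable
qed

lemma target_rate_pos: "0 < r \<Longrightarrow> 0 < snr \<Longrightarrow> 0 < target_rate r (s2 S D) snr"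
  using var_pos by (auto simp: target_rate_def links_def intro!: mult_pos_pos ln_gt_zero)

(* Lower bound: outage whenever the three source links are weak. *)
lemma outage_lower_bound:
  assumes snr: "0 < snr" and v: "0 \<le> threshold r snr" "threshold r snr \<le> var_min"
  shows "(threshold r snr / (exp 1 * var_max)) ^ 3 \<le> outage_TDA M \<alpha> s2 Bw tau r snr"
proof -
  let ?v = "threshold r snr" and ?G = "\<lambda>l. gain_below l (threshold r snr)"
  have sub: "?G (S,D) \<inter> ?G (S,R1) \<inter> ?G (S,R2) \<subseteq> outage_event Bw tau r snr"
    using snr unfolding outage_event_def gain_below_def threshold_def
    by (auto intro!: I_TDA_outage_if_weak_source_links simp: rho0_def)
  have "(?v / (exp 1 * var_max)) ^ 3 = ?v * ?v * ?v / (exp 1 * var_max) ^ 3"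
    by (simp add: power3_eq_cube)
  also have "\<dots> \<le> prob (?G (S,D) \<inter> ?G (S,R1) \<inter> ?G (S,R2))"
    using v by (intro prob_gain_below_triple(2)) (auto simp: links_def)
  also have "\<dots> \<le> outage_TDA M \<alpha> s2 Bw tau r snr"
    unfolding outage_TDA_eq using sub outage_event_sets[OF snr] by (rule finite_measure_mono)
  finally show ?thesis .
qed

lemma outage_pos:
  assumes "0 < snr" "0 < threshold r snr" "threshold r snr \<le> var_min"
  shows "0 < outage_TDA M \<alpha> s2 Bw tau r snr"
proof -
  have "0 < (threshold r snr / (exp 1 * var_max)) ^ 3"
    using assms var_bounds[of S D] by (simp add: links_def)
  also have "\<dots> \<le> outage_TDA M \<alpha> s2 Bw tau r snr"
    using assms by (intro outage_lower_bound) auto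
  finally show ?thesis .
qed

(* Upper bound from the four outage patterns of I_TDA_outage_cases, where w is the coarser
   level for the two relay-destination links. *)
lemma outage_upper_bound:
  assumes snr: "0 < snr" and r: "0 < r" and Bw: "0 < Bw" and \<kappa>: "0 < \<kappa>" "\<kappa> \<le> 1" and c: "0 < c" "c \<le> 1"
    and freq: "\<And>a1 a2. Bw * \<kappa> * ln (1 + rho0 snr * c * (max (cmod a1) (cmod a2))\<^sup>2)
       \<le> integral {-Bw/2..Bw/2}
            (\<lambda>f. ln (1 + rho0 snr * (cmod (a1 * cis (2*pi*f*tau R1) + a2 * cis (2*pi*f*tau R2)))\<^sup>2))"
  defines "w \<equiv> outage_level (rho0 snr * c) (target_rate r (s2 S D) snr / \<kappa>)"
  shows "outage_TDA M \<alpha> s2 Bw tau r snr \<le> 4 / var_min ^ 3 * threshold r snr * w\<^sup>2"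
proof -
  let ?v = "threshold r snr" and ?Rt = "target_rate r (s2 S D) snr"
  have \<rho>: "0 < rho0 snr" using snr by (simp add: rho0_def)
  have Rt: "0 < ?Rt" using target_rate_pos r snr .
  have v: "0 \<le> ?v" unfolding threshold_def using outage_level_pos[OF \<rho> Rt] by simp
  have vw: "?v \<le> w" unfolding threshold_def w_def
    using \<rho> c \<kappa> Rt by (intro outage_level_mono) (auto simp: mult_le_cancel_left1 le_divide_eq)
  have vmin: "0 < var_min" using var_bounds[of S D] by (auto simp: links_def)
  define E_src where "E_src = gain_below (S,D) ?v \<inter> gain_below (S,R1) ?v \<inter> gain_below (S,R2) ?v"
  define E_R1 where "E_R1 = gain_below (S,D) ?v \<inter> gain_below (S,R2) ?v \<inter> gain_below (R1,D) ?v"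
  define E_R2 where "E_R2 = gain_below (S,D) ?v \<inter> gain_below (S,R1) ?v \<inter> gain_below (R2,D) ?v"
  define E_both where "E_both = gain_below (S,D) ?v \<inter> gain_below (R1,D) w \<inter> gain_below (R2,D) w"
  have sub: "outage_event Bw tau r snr \<subseteq> E_src \<union> E_R1 \<union> E_R2 \<union> E_both"
  proof
    fix \<omega> assume "\<omega> \<in> outage_event Bw tau r snr"
    then have \<omega>: "\<omega> \<in> space M" and "I_TDA Bw tau snr ?Rt (\<lambda>i j. \<alpha> i j \<omega>) < ?Rt"
      by (auto simp: outage_event_def)
    from I_TDA_outage_cases[OF \<rho> Bw \<kappa>(1) c(1) freq this(2)]
    show "\<omega> \<in> E_src \<union> E_R1 \<union> E_R2 \<union> E_both" using \<omega>
      unfolding E_src_def E_R1_def E_R2_def E_both_def gain_below_def threshold_def w_def by auto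
  qed
  have sets: "E_src \<in> events" "E_R1 \<in> events" "E_R2 \<in> events" "E_both \<in> events"
    unfolding E_src_def E_R1_def E_R2_def E_both_def
    using v vw by (auto intro!: sets.Int gain_below_sets simp: links_def)
  have "outage_TDA M \<alpha> s2 Bw tau r snr \<le> prob (E_src \<union> E_R1 \<union> E_R2 \<union> E_both)"
    unfolding outage_TDA_eq using sub sets by (intro finite_measure_mono) auto
  also have "\<dots> \<le> prob E_src + prob E_R1 + prob E_R2 + prob E_both"
    using sets measure_Un_le[of "E_src \<union> E_R1 \<union> E_R2" M E_both]
      measure_Un_le[of "E_src \<union> E_R1" M E_R2] measure_Un_le[of E_src M E_R1] by auto
  also have "\<dots> \<le> ?v * ?v * ?v / var_min ^ 3 + ?v * ?v * ?v / var_min ^ 3 + ?v * ?v * ?v / var_min ^ 3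
      + ?v * w * w / var_min ^ 3"
    unfolding E_src_def E_R1_def E_R2_def E_both_def
    using v vw by (intro add_mono prob_gain_below_triple(1) order.refl) (auto simp: links_def)
  also have "\<dots> \<le> 4 / var_min ^ 3 * ?v * w\<^sup>2"
  proof -
    have "?v * ?v * ?v \<le> ?v * w * w" using v vw by (intro mult_mono) auto
    then have "?v * ?v * ?v / var_min ^ 3 \<le> ?v * w * w / var_min ^ 3"
      using vmin by (simp add: divide_right_mono)
    then show ?thesis by (simp add: power2_eq_square)
  qed
  finally show ?thesis .
qed


lemma threshold_eq: "threshold r snr = outage_level ((2/3) * snr) (r * ln (1 + snr * s2 S D))"
  by (simp add: threshold_def rho0_def target_rate_def)

(* For r < 1/2 the level tends to 0, so eventually it lies in the range of the small-ball bounds. *)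
lemma eventually_threshold_small:
  assumes "0 < r" "r < 1/2"
  shows "eventually (\<lambda>snr. 0 < snr \<and> 0 < threshold r snr \<and> threshold r snr \<le> var_min) at_top"
proof -
  have s: "0 < s2 S D" and vmin: "0 < var_min" using var_pos var_bounds[of S D] by (auto simp: links_def)
  have "(threshold r \<longlongrightarrow> 0) at_top"
    unfolding threshold_eq using assms s by (intro outage_level_vanishes) auto
  then have "eventually (\<lambda>snr. threshold r snr < var_min) at_top" using vmin by (rule order_tendstoD)
  then show ?thesis using eventually_gt_at_top[of 0]
    by eventually_elim (use assms in \<open>auto simp: threshold_def rho0_def intro!: outage_level_pos target_rate_pos\<close>)
qed

lemma outage_exponent_below:
  assumes r: "0 < r" "r < 1/2" and a: "3 * (1 - 2 * r) < a"
  shows "eventually (\<lambda>snr. - ln (outage_TDA M \<alpha> s2 Bw tau r snr) / ln snr < a) at_top"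
proof -
  have s: "0 < s2 S D" and vmax: "0 < var_max" using var_pos var_bounds[of S D] by (auto simp: links_def)
  define L where "L snr = 1 / (exp 1 * var_max) ^ 3 * threshold r snr ^ 3" for snr
  have "((\<lambda>x. ln (threshold r x) / ln x) \<longlongrightarrow> 2 * r - 1) at_top"
    unfolding threshold_eq using r s by (intro outage_level_exponent) auto
  then have "((\<lambda>x. ln (L x) / ln x) \<longlongrightarrow> real 3 * (2 * r - 1)) at_top"
    unfolding L_def using eventually_threshold_small[OF r] vmax
    by (intro ln_ratio_scale_power) (auto elim: eventually_mono)
  moreover have "eventually (\<lambda>snr. 0 < L snr \<and> L snr \<le> outage_TDA M \<alpha> s2 Bw tau r snr) at_top"
    using eventually_threshold_small[OF r] proof eventually_elim
    case (elim snr)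
    then show ?case using outage_lower_bound[of snr r] vmax by (simp add: L_def power_divide)
  qed
  ultimately show ?thesis using a by (intro neg_ln_ratio_less) auto
qed

lemma outage_exponent_above:
  assumes Bw: "0 < Bw" and tau: "tau R1 \<noteq> tau R2" and r: "0 < r" "r < 1/2" and a: "a < 3 * (1 - 2 * r)"
  shows "eventually (\<lambda>snr. a < - ln (outage_TDA M \<alpha> s2 Bw tau r snr) / ln snr) at_top"
proof -
  have s: "0 < s2 S D" and vmin: "0 < var_min" using var_pos var_bounds[of S D] by (auto simp: links_def)
  obtain \<kappa> where \<kappa>: "0 < \<kappa>" "\<kappa> < 1" and a_\<kappa>: "a < 3 - 2 * r - 4 * r / \<kappa>"
    using exponent_gap[OF r(1) a] by blast
  obtain c where c: "0 < c" "c \<le> 1" and freq: "\<forall>\<rho>\<ge>0. \<forall>a1 a2.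
      Bw * \<kappa> * ln (1 + \<rho> * c * (max (cmod a1) (cmod a2))\<^sup>2)
      \<le> integral {-Bw/2..Bw/2} (\<lambda>f. ln (1 + \<rho> * (cmod (a1 * cis (2*pi*f*tau R1) + a2 * cis (2*pi*f*tau R2)))\<^sup>2))"
    using frequency_diversity[OF tau Bw \<kappa>(2)] by (elim exE conjE) (rule that)
  define w where "w snr = outage_level (rho0 snr * c) (target_rate r (s2 S D) snr / \<kappa>)" for snr
  have w_eq: "w snr = outage_level ((2/3 * c) * snr) ((r / \<kappa>) * ln (1 + snr * s2 S D))" for snr
    by (simp add: w_def rho0_def target_rate_def mult_ac)
  define U where "U snr = (4 / var_min ^ 3 * threshold r snr ^ 1) * (1 * w snr ^ 2)" for snr
  have ev: "eventually (\<lambda>snr. 0 < snr \<and> 0 < threshold r snr \<and> threshold r snr \<le> var_min \<and> 0 < w snr) at_top"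
    using eventually_threshold_small[OF r] proof eventually_elim
    case (elim snr)
    then show ?case using r \<kappa> c
      by (auto simp: w_def rho0_def intro!: outage_level_pos divide_pos_pos target_rate_pos)
  qed
  have "((\<lambda>x. ln (threshold r x) / ln x) \<longlongrightarrow> 2 * r - 1) at_top"
    unfolding threshold_eq using r s by (intro outage_level_exponent) auto
  moreover have "((\<lambda>x. ln (w x) / ln x) \<longlongrightarrow> 2 * (r / \<kappa>) - 1) at_top"
    unfolding w_eq using r s \<kappa> c by (intro outage_level_exponent) auto
  ultimately have "((\<lambda>x. ln (U x) / ln x) \<longlongrightarrow> real 1 * (2 * r - 1) + real 2 * (2 * (r / \<kappa>) - 1)) at_top"
    unfolding U_def using ev vmin
    by (intro ln_ratio_mult ln_ratio_scale_power) (auto elim: eventually_mono)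
  moreover have "eventually (\<lambda>snr. 0 < outage_TDA M \<alpha> s2 Bw tau r snr \<and> outage_TDA M \<alpha> s2 Bw tau r snr \<le> U snr) at_top"
    using ev proof eventually_elim
    case (elim snr)
    have "0 \<le> rho0 snr" using elim by (simp add: rho0_def)
    then have "outage_TDA M \<alpha> s2 Bw tau r snr \<le> 4 / var_min ^ 3 * threshold r snr * (w snr)\<^sup>2"
      unfolding w_def using elim r Bw \<kappa> c freq by (intro outage_upper_bound) auto
    then show ?case using outage_pos[of snr r Bw tau] elim by (simp add: U_def)
  qed
  ultimately show ?thesis using a_\<kappa> by (intro neg_ln_ratio_greater) (auto simp: field_simps)
qed

end

theorem theorem3:
  fixes M :: "'w measure"
    and \<alpha> :: "node \<Rightarrow> node \<Rightarrow> 'w \<Rightarrow> complex"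
    and s2 :: "node \<Rightarrow> node \<Rightarrow> real"
    and Bw r :: real
    and tau :: "node \<Rightarrow> real"
  assumes "prob_space M"
    and "prob_space.indep_vars M (\<lambda>_. borel) (\<lambda>p. \<alpha> (fst p) (snd p)) links"
    and "\<forall>(i,j)\<in>links. s2 i j > 0"
    and "\<forall>(i,j)\<in>links. distributed M lborel (\<alpha> i j)
                          (\<lambda>z. ennreal (cgauss_density (s2 i j) z))"
    and "Bw > 0"
    and "0 < r" and "r < 1/2"
    and "\<bar>tau R2 - tau R1\<bar> * Bw \<ge> 2"
  shows "((\<lambda>snr. - ln (outage_TDA M \<alpha> s2 Bw tau r snr) / ln snr)
           \<longlongrightarrow> 3 * (1 - 2 * r)) at_top"
proof -
  interpret rayleigh_network M \<alpha> s2
    using assms(1-4) by (simp add: rayleigh_network_def rayleigh_network_axioms_def)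
  have tau: "tau R1 \<noteq> tau R2" using assms(5,8) by auto
  show ?thesis
  proof (rule order_tendstoI)
    fix a assume "3 * (1 - 2 * r) < a"
    then show "eventually (\<lambda>snr. - ln (outage_TDA M \<alpha> s2 Bw tau r snr) / ln snr < a) at_top"
      using outage_exponent_below assms(6,7) by blast
  next
    fix a assume "a < 3 * (1 - 2 * r)"
    then show "eventually (\<lambda>snr. a < - ln (outage_TDA M \<alpha> s2 Bw tau r snr) / ln snr) at_top"
      using outage_exponent_above[OF assms(5) tau assms(6,7)] by blast
  qed
qed

end
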